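(* Let $P$ be a poset with least element and $f:P\times P\to P$ monotone. Let $m,n\ge0$ be such that for every $x\in P$, $\mu_y.f(x,y)=f_x^m(\bot)$ where $f_x=f(x,-)$, and such that $h(x)=\mu_y.f(x,y)$ satisfies $\mu.h=h^n(\bot)$. Then the map $d(x)=f(x,x)$ has a least fixed point and $\mu_x.f(x,x)=d^{nm}(\bot)$.
   Context: $\mu$ denotes least fixed point; exponents denote iterated composition. *)

theory Defs
  imports Main "HOL-Library.Product_Order"
begin

definition is_lfp :: "('a::order \<Rightarrow> 'a) \<Rightarrow> 'a \<Rightarrow> bool" where
  "is_lfp g x \<longleftrightarrow> g x = x \<and> (\<forall>y. g y = y \<longrightarrow> x \<le> y)"

text \<open>The least fixed point mu.g (meaningful when it exists).\<close>
definition mu :: "('a::order \<Rightarrow> 'a) \<Rightarrow> 'a" where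
  "mu g = (THE x. is_lfp g x)"

end

theory Submission
  imports Defs
begin

text \<open>Let \<open>d x = f (x, x)\<close> and \<open>h x = \<mu>y. f (x, y)\<close>, with \<open>a = h\<^sup>n(\<bottom>)\<close> the least fixed point
  of \<open>h\<close>. Since \<open>a = h a\<close> is a fixed point of \<open>f (a, -)\<close>, it is a fixed point of \<open>d\<close>, so every
  Kleene iterate \<open>d\<^sup>j(\<bottom>)\<close> lies below \<open>a\<close>. Conversely, one application of \<open>h\<close> is \<open>m\<close> steps
  of \<open>f (x, -)\<close>, each dominated by a step of \<open>d\<close> once \<open>x\<close> is itself a \<open>d\<close>-iterate; hence
  \<open>h\<^sup>k(\<bottom>) \<le> d\<^sup>k\<^sup>m(\<bottom>)\<close>. So \<open>d\<^sup>n\<^sup>m(\<bottom>) = a\<close> is a fixed point reached by Kleene iteration,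
  and such a fixed point is always the least one.\<close>

lemma is_lfp_unique: "is_lfp g a \<Longrightarrow> is_lfp g b \<Longrightarrow> a = b"
  unfolding is_lfp_def by (meson order.antisym)

lemma mu_eqI: "is_lfp g a \<Longrightarrow> mu g = a"
  unfolding mu_def by (metis theI is_lfp_unique)

lemma funpow_bot_le_prefixed:
  fixes g :: "'a::order_bot \<Rightarrow> 'a"
  assumes "mono g" and "g z \<le> z"
  shows "(g ^^ k) bot \<le> z"
proof (induction k)
  case (Suc k)
  then have "g ((g ^^ k) bot) \<le> g z" using \<open>mono g\<close> by (rule monoD[rotated])
  then show ?case using \<open>g z \<le> z\<close> by simp
qed simp

lemma is_lfp_funpow_bot:
  fixes g :: "'a::order_bot \<Rightarrow> 'a"
  assumes "mono g" and "g ((g ^^ k) bot) = (g ^^ k) bot"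
  shows "is_lfp g ((g ^^ k) bot)"
  unfolding is_lfp_def using assms funpow_bot_le_prefixed by (metis order.refl)

lemma funpow_bot_mono_fun:
  fixes g g' :: "'a::order_bot \<Rightarrow> 'a"
  assumes "mono g'" and "\<And>x. g x \<le> g' x"
  shows "(g ^^ k) bot \<le> (g' ^^ k) bot"
proof (induction k)
  case (Suc k)
  have "g ((g ^^ k) bot) \<le> g' ((g ^^ k) bot)" by (fact assms(2))
  also have "\<dots> \<le> g' ((g' ^^ k) bot)" using Suc \<open>mono g'\<close> by (rule monoD[rotated])
  finally show ?case by simp
qed simp

lemma mono_pairD:
  fixes f :: "'a::order \<times> 'b::order \<Rightarrow> 'c::order"
  shows "mono f \<Longrightarrow> x \<le> x' \<Longrightarrow> y \<le> y' \<Longrightarrow> f (x, y) \<le> f (x', y')"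
  by (simp add: monoD less_eq_prod_def)

lemma mono_diagonal: "mono f \<Longrightarrow> mono (\<lambda>x. f (x, x))"
  by (auto intro: monoI mono_pairD)

lemma mono_funpow_section:
  fixes f :: "'a::order_bot \<times> 'a \<Rightarrow> 'a"
  assumes "mono f"
  shows "mono (\<lambda>x. ((\<lambda>y. f (x, y)) ^^ m) bot)"
proof (rule monoI)
  fix x x' :: 'a
  assume "x \<le> x'"
  have "mono (\<lambda>y. f (x', y))" by (auto intro: monoI mono_pairD[OF assms])
  then show "((\<lambda>y. f (x, y)) ^^ m) bot \<le> ((\<lambda>y. f (x', y)) ^^ m) bot"
    by (rule funpow_bot_mono_fun) (auto intro: mono_pairD[OF assms \<open>x \<le> x'\<close>])
qed

lemma funpow_section_le_diagonal:
  fixes f :: "'a::order_bot \<times> 'a \<Rightarrow> 'a"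
  assumes "mono f"
  defines "d \<equiv> \<lambda>x. f (x, x)"
  shows "((\<lambda>y. f ((d ^^ i) bot, y)) ^^ j) bot \<le> (d ^^ (i + j)) bot"
proof (induction j)
  case (Suc j)
  have "(d ^^ i) bot \<le> (d ^^ (i + j)) bot"
    unfolding d_def by (rule funpow_decreasing[OF le_add1 mono_diagonal[OF assms(1)]])
  then show ?case using mono_pairD[OF assms(1) _ Suc] by (simp add: d_def)
qed simp

lemma funpow_parametric_le_diagonal:
  fixes f :: "'a::order_bot \<times> 'a \<Rightarrow> 'a" and m :: nat
  assumes "mono f"
  defines "h \<equiv> \<lambda>x. ((\<lambda>y. f (x, y)) ^^ m) bot" and "d \<equiv> \<lambda>x. f (x, x)"
  shows "(h ^^ k) bot \<le> (d ^^ (k * m)) bot"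
proof (induction k)
  case (Suc k)
  have "(h ^^ Suc k) bot = h ((h ^^ k) bot)" by simp
  also have "\<dots> \<le> h ((d ^^ (k * m)) bot)"
    using mono_funpow_section[OF assms(1)] Suc unfolding h_def by (rule monoD)
  also have "\<dots> \<le> (d ^^ (k * m + m)) bot"
    unfolding h_def d_def by (rule funpow_section_le_diagonal[OF assms(1)])
  finally show ?case by (simp add: add.commute)
qed simp

theorem mainTheorem15:
  fixes f :: "'a::order_bot \<times> 'a \<Rightarrow> 'a" and m n :: nat
  assumes "mono f"
    and "\<forall>x. is_lfp (\<lambda>y. f (x, y)) (((\<lambda>y. f (x, y)) ^^ m) bot)"
    and "is_lfp (\<lambda>x. mu (\<lambda>y. f (x, y))) (((\<lambda>x. mu (\<lambda>y. f (x, y))) ^^ n) bot)"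
  shows "is_lfp (\<lambda>x. f (x, x)) (((\<lambda>x. f (x, x)) ^^ (n * m)) bot)"
proof -
  define h where "h = (\<lambda>x. ((\<lambda>y. f (x, y)) ^^ m) bot)"
  define d where "d = (\<lambda>x. f (x, x))"
  define a where "a = (h ^^ n) bot"
  have mu_section: "(\<lambda>x. mu (\<lambda>y. f (x, y))) = h"
    unfolding h_def using assms(2) mu_eqI by blast
  have "h a = a"
    using assms(3) unfolding mu_section a_def is_lfp_def by simp
  then have "d a = a"
    using assms(2) unfolding h_def d_def is_lfp_def by metis
  then have "(d ^^ (n * m)) bot \<le> a"
    unfolding d_def by (intro funpow_bot_le_prefixed mono_diagonal[OF assms(1)]) simp
  moreover have "a \<le> (d ^^ (n * m)) bot"
    unfolding a_def h_def d_def by (rule funpow_parametric_le_diagonal[OF assms(1)])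
  ultimately have "(d ^^ (n * m)) bot = a" by simp
  then show ?thesis
    using \<open>d a = a\<close> is_lfp_funpow_bot mono_diagonal[OF assms(1)] unfolding d_def by metis
qed

end
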